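(* Consider stochastic momentum gradient descent on a 2-layer diagonal linear network as described in the context. Assume that the iterates $(u_k,v_k)$ converge to $(u_\infty,v_\infty)$, let $\theta^{\mathrm{SMGD}}=u_\infty\odot v_\infty$, assume that $\Delta_\infty=|u_\infty^2-v_\infty^2|$ has nonzero coordinates, and that no coordinate of $w_{\pm,k}$ is ever exactly zero. Then $\theta^{\mathrm{SMGD}}$ interpolates the dataset and $$\theta^{\mathrm{SMGD}}=\arg\min_{\theta^\star\in\mathcal{S}}D_{\psi_{\Delta_\infty}}(\theta^\star,\tilde\theta_0),$$ where $\Delta_\infty=\Delta_0\odot\exp\big(-(S_++S_-)\big)$ and $\tilde\theta_0=\frac14\big(w_{+,0}^2\odot\exp(-2S_+)-w_{-,0}^2\odot\exp(-2S_-)\big)$.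
   Context: Data $x_1,\dots,x_n\in\mathbb{R}^d$, $y\in\mathbb{R}^n$, interpolators $\mathcal{S}=\{\theta:\langle\theta,x_i\rangle=y_i\ \forall i\}$. For a batch $\mathcal B\subset[n]$ of size $B$, $L_{\mathcal B}(\theta)=\frac{1}{2B}\sum_{i\in\mathcal B}(y_i-\langle x_i,\theta\rangle)^2$. Vector operations are coordinate-wise. Stochastic momentum gradient descent with $\gamma>0$, $\beta\in[0,1)$ and batches $\mathcal B_k\subset[n]$ of size $B\in[n]$ sampled with or without replacement: $u_{k+1}=u_k-\gamma\nabla L_{\mathcal B_k}(\theta_k)\odot v_k+\beta(u_k-u_{k-1})$, $v_{k+1}=v_k-\gamma\nabla L_{\mathcal B_k}(\theta_k)\odot u_k+\beta(v_k-v_{k-1})$, $\theta_k=u_k\odot v_k$, with $u_1=u_0$, $v_1=v_0$. $w_{\pm,k}=u_k\pm v_k$, $\Delta_k=|u_k^2-v_k^2|$. $S_\pm=\frac{1}{1-\beta}\sum_{k=1}^\infty[r(w_{\pm,k+1}/w_{\pm,k})+\beta r(w_{\pm,k}/w_{\pm,k+1})]$ with $r(z)=(z-1)-\ln|z|$. Hyperbolic entropy: for $\Delta\in(0,\infty)^d$, $\psi_\Delta(\theta)=\frac14\sum_{i=1}^d\big(2\theta_i\mathrm{arcsinh}(2\theta_i/\Delta_i)-\sqrt{4\theta_i^2+\Delta_i^2}+\Delta_i\big)$; Bregman divergence $D_\Phi(\theta_1,\theta_2)=\Phi(\theta_1)-\Phi(\theta_2)-\langle\nabla\Phi(\theta_2),\theta_1-\theta_2\rangle$.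 *)

theory Defs
  imports "HOL-Analysis.Analysis"
begin

definition interpolators :: "nat \<Rightarrow> (nat \<Rightarrow> real^'d) \<Rightarrow> (nat \<Rightarrow> real) \<Rightarrow> (real^'d) set" where
  "interpolators n x y = {\<theta>. \<forall>i<n. inner \<theta> (x i) = y i}"

definition batch_loss :: "(nat \<Rightarrow> real^'d) \<Rightarrow> (nat \<Rightarrow> real) \<Rightarrow> nat set \<Rightarrow> real^'d \<Rightarrow> real" where
  "batch_loss x y Bs \<theta> = (1 / (2 * real (card Bs))) * (\<Sum>i\<in>Bs. (y i - inner (x i) \<theta>)^2)"

definition batch_grad :: "(nat \<Rightarrow> real^'d) \<Rightarrow> (nat \<Rightarrow> real) \<Rightarrow> nat set \<Rightarrow> real^'d \<Rightarrow> real^'d" where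
  "batch_grad x y Bs \<theta> = - ((1 / real (card Bs)) *\<^sub>R (\<Sum>i\<in>Bs. (y i - inner (x i) \<theta>) *\<^sub>R x i))"

definition hmul :: "real^'d \<Rightarrow> real^'d \<Rightarrow> real^'d" where
  "hmul a b = (\<chi> i. a$i * b$i)"

definition rfun :: "real \<Rightarrow> real" where
  "rfun z = (z - 1) - ln \<bar>z\<bar>"

definition S_term :: "real \<Rightarrow> (nat \<Rightarrow> real^'d) \<Rightarrow> 'd \<Rightarrow> nat \<Rightarrow> real" where
  "S_term \<beta> w i k = rfun (w (k+1) $ i / w k $ i) + \<beta> * rfun (w k $ i / w (k+1) $ i)"

definition S_sum :: "real \<Rightarrow> (nat \<Rightarrow> real^'d) \<Rightarrow> real^'d" where
  "S_sum \<beta> w = (\<chi> i. (1 / (1 - \<beta>)) * (\<Sum>k. S_term \<beta> w i (k+1)))"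

definition hyp_entropy :: "real^'d \<Rightarrow> real^'d \<Rightarrow> real" where
  "hyp_entropy \<Delta> \<theta> = (1/4) * (\<Sum>i\<in>UNIV.
      2 * \<theta>$i * arsinh (2 * \<theta>$i / \<Delta>$i) - sqrt (4 * (\<theta>$i)^2 + (\<Delta>$i)^2) + \<Delta>$i)"

text \<open>Bregman divergence D_Phi(a,b) = Phi a - Phi b - <grad Phi(b), a - b>, where the
  inner product with the gradient is the Frechet derivative at b applied to a - b.\<close>
definition bregman :: "('a::real_normed_vector \<Rightarrow> real) \<Rightarrow> 'a \<Rightarrow> 'a \<Rightarrow> real" where
  "bregman \<Phi> a b = \<Phi> a - \<Phi> b - frechet_derivative \<Phi> (at b) (a - b)"

end

theory Submission
  imports Defs
begin

text \<open>Coordinatewise, \<open>w\<^sub>+ = u + v\<close> and \<open>w\<^sub>- = u - v\<close> follow scalar heavy-ball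
  recursions whose rates are the same sequence \<open>\<gamma> g\<^sub>k\<close> (\<open>g\<^sub>k\<close> the batch gradient) with opposite
  signs. For such a recursion the rate plus the summand of \<open>S\<close> is the increment of an explicit
  potential in \<open>ln \<bar>w\<bar>\<close>, so adding the recursions for \<open>w\<^sub>+\<close> and \<open>w\<^sub>-\<close> cancels the rates: both
  \<open>S\<close>-series converge, and the logarithmic drifts \<open>ln \<bar>w\<^sub>\<plusminus>(\<infinity>) / w\<^sub>\<plusminus>(0)\<bar> + S\<^sub>\<plusminus>\<close> are opposite
  numbers \<open>E\<close> and \<open>-E\<close>, where \<open>(1 - \<beta>) E = - \<Sum>\<^sub>k \<gamma> g\<^sub>k\<close>. The first fact gives the formula for
  \<open>\<Delta>\<^sub>\<infinity>\<close>; the second says that the mirror map \<open>\<theta> \<mapsto> arsinh (2 \<theta> / \<Delta>\<^sub>\<infinity>)\<close> sends \<open>\<theta>\<^sub>\<infinity>\<close> and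
  \<open>\<theta>t_0\<close> to points differing by \<open>2 E\<close>. Each \<open>g\<^sub>k\<close> is a combination of data points, hence
  orthogonal to differences of interpolators, and so is \<open>E\<close>: this is the optimality condition
  of the Bregman projection of \<open>\<theta>t_0\<close> onto the interpolators. Finally \<open>\<theta>\<^sub>\<infinity>\<close> interpolates because
  the gradients vanish in the limit while every data point is sampled infinitely often.\<close>

lemma rfun_nonneg: "z > 0 \<Longrightarrow> rfun z \<ge> 0"
  unfolding rfun_def using ln_le_minus_one[of z] by simp

lemma abs_power2_diff: "\<bar>a\<^sup>2 - b\<^sup>2\<bar> = \<bar>a + b\<bar> * \<bar>a - b\<bar>" for a b :: real
  by (simp add: abs_mult[symmetric] power2_eq_square algebra_simps)

lemma arsinh_power2_diff_div:
  fixes A B :: real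
  assumes "A > 0" "B > 0"
  shows "arsinh ((A\<^sup>2 - B\<^sup>2) / (2 * A * B)) = ln (A / B)"
proof -
  have "sinh (ln (A / B)) = (A\<^sup>2 - B\<^sup>2) / (2 * A * B)"
    using assms by (simp add: sinh_def exp_minus field_simps power2_eq_square)
  then show ?thesis by (metis arsinh_sinh_real)
qed

definition hyp_potential :: "real \<Rightarrow> real \<Rightarrow> real" where
  "hyp_potential D t = 2 * t * arsinh (2 * t / D) - sqrt (4 * t\<^sup>2 + D\<^sup>2) + D"

lemma hyp_entropy_eq_sum: "hyp_entropy D \<theta> = (1/4) * (\<Sum>i\<in>UNIV. hyp_potential (D$i) (\<theta>$i))"
  unfolding hyp_entropy_def hyp_potential_def by simp

lemma hyp_potential_has_real_derivative:
  assumes D: "D > 0"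
  shows "(hyp_potential D has_real_derivative 2 * arsinh (2 * t / D)) (at t)"
proof -
  have pos: "4 * t\<^sup>2 + D\<^sup>2 > 0" using D by (simp add: add_nonneg_pos)
  have sqrt_eq: "sqrt ((2 * t / D)\<^sup>2 + 1) = sqrt (4 * t\<^sup>2 + D\<^sup>2) / D"
  proof -
    have "(2 * t / D)\<^sup>2 + 1 = (4 * t\<^sup>2 + D\<^sup>2) / D\<^sup>2"
      using D by (simp add: field_simps power2_eq_square)
    then show ?thesis using D by (simp add: real_sqrt_divide)
  qed
  have arsinh_deriv: "((\<lambda>x. arsinh (2 * x / D)) has_real_derivative 1 / sqrt ((2 * t / D)\<^sup>2 + 1) * (2 / D)) (at t)"
    by (rule DERIV_chain2[OF arsinh_real_has_field_derivative]) (use D in \<open>auto intro!: derivative_eq_intros\<close>)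
  have "(hyp_potential D has_real_derivative
      2 * arsinh (2 * t / D) + 2 * t * (1 / sqrt ((2 * t / D)\<^sup>2 + 1) * (2 / D))
      - 8 * t / (2 * sqrt (4 * t\<^sup>2 + D\<^sup>2))) (at t)"
    unfolding hyp_potential_def [abs_def] using D pos
    by (auto intro!: derivative_eq_intros arsinh_deriv) (simp add: inverse_eq_divide)
  moreover have cancel: "2 * t * (1 / sqrt ((2 * t / D)\<^sup>2 + 1) * (2 / D)) = 8 * t / (2 * sqrt (4 * t\<^sup>2 + D\<^sup>2))"
    unfolding sqrt_eq using D pos by (simp add: field_simps)
  ultimately show ?thesis by (simp only: cancel add_diff_cancel_right')
qed

lemma convex_on_hyp_potential:
  assumes "D > 0"
  shows "convex_on UNIV (hyp_potential D)"
proof (rule convex_on_realI[OF connected_UNIV hyp_potential_has_real_derivative[OF assms]])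
  fix s t :: real
  assume "s \<le> t"
  then have "2 * s / D \<le> 2 * t / D" using assms by (simp add: divide_right_mono)
  then show "2 * arsinh (2 * s / D) \<le> 2 * arsinh (2 * t / D)" by (simp add: not_less[symmetric])
qed

lemma hyp_potential_above_tangent:
  assumes "D > 0"
  shows "hyp_potential D s - hyp_potential D t \<ge> 2 * arsinh (2 * t / D) * (s - t)"
  using convex_on_imp_above_tangent[OF convex_on_hyp_potential[OF assms] connected_UNIV]
    hyp_potential_has_real_derivative[OF assms]
  by simp

lemma hyp_entropy_has_derivative:
  fixes D b :: "real^'d"
  assumes D: "\<And>i. D$i > 0"
  shows "(hyp_entropy D has_derivative
     (\<lambda>h. (1/4) * (\<Sum>i\<in>UNIV. 2 * arsinh (2 * b$i / D$i) * h$i))) (at b)"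
  unfolding hyp_entropy_eq_sum [abs_def]
proof (intro has_derivative_mult_right has_derivative_sum)
  fix i :: 'd
  have "(hyp_potential (D$i) has_derivative (\<lambda>h. 2 * arsinh (2 * b$i / D$i) * h)) (at (b$i))"
    using hyp_potential_has_real_derivative[OF D] by (rule has_field_derivative_imp_has_derivative)
  from has_derivative_compose[OF bounded_linear_imp_has_derivative[OF bounded_linear_vec_nth] this]
  show "((\<lambda>\<theta>. hyp_potential (D$i) (\<theta>$i)) has_derivative (\<lambda>h. 2 * arsinh (2 * b$i / D$i) * h$i)) (at b)" .
qed

text \<open>The gradient of \<open>hyp_entropy D\<close> is \<open>\<chi> i. arsinh (2 * \<theta>$i / D$i) / 2\<close>, so the hypothesis
  is the first-order optimality condition of the Bregman projection of \<open>b\<close>, and convexity of the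
  potential does the rest.\<close>
lemma bregman_hyp_entropy_le:
  fixes D b s t :: "real^'d"
  assumes D: "\<And>i. D$i > 0"
    and orth: "(\<Sum>i\<in>UNIV. (arsinh (2 * t$i / D$i) - arsinh (2 * b$i / D$i)) * (s$i - t$i)) = 0"
  shows "bregman (hyp_entropy D) t b \<le> bregman (hyp_entropy D) s b"
proof -
  let ?c = "\<lambda>i. 2 * arsinh (2 * b$i / D$i)"
  have "0 = (1/4) * (\<Sum>i\<in>UNIV. 2 * ((arsinh (2 * t$i / D$i) - arsinh (2 * b$i / D$i)) * (s$i - t$i)))"
    using orth by (simp add: sum_distrib_left[symmetric])
  also have "\<dots> \<le> (1/4) * (\<Sum>i\<in>UNIV. hyp_potential (D$i) (s$i) - hyp_potential (D$i) (t$i) - ?c i * (s$i - t$i))"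
    using hyp_potential_above_tangent[OF D]
    by (intro mult_left_mono sum_mono) (auto simp: algebra_simps)
  also have "\<dots> = bregman (hyp_entropy D) s b - bregman (hyp_entropy D) t b"
    unfolding bregman_def frechet_derivative_at[OF hyp_entropy_has_derivative[OF D], symmetric] hyp_entropy_eq_sum
    by (simp add: sum_subtractf sum.distrib algebra_simps)
  finally show ?thesis by simp
qed

definition S_summand :: "real \<Rightarrow> (nat \<Rightarrow> real) \<Rightarrow> nat \<Rightarrow> real" where
  "S_summand \<beta> p k = rfun (p (k+1) / p k) + \<beta> * rfun (p k / p (k+1))"

definition S_series :: "real \<Rightarrow> (nat \<Rightarrow> real) \<Rightarrow> real" where
  "S_series \<beta> p = (1 / (1 - \<beta>)) * (\<Sum>k. S_summand \<beta> p (k+1))"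

lemma S_term_eq_S_summand: "S_term \<beta> w i = S_summand \<beta> (\<lambda>k. w k $ i)"
  by (simp add: fun_eq_iff S_term_def S_summand_def)

lemma S_sum_nth: "S_sum \<beta> w $ i = S_series \<beta> (\<lambda>k. w k $ i)"
  by (simp add: S_sum_def S_series_def S_term_eq_S_summand)

text \<open>Dividing the momentum recursion by \<open>p (k+1)\<close> gives
  \<open>a (k+1) + p (k+2) / p (k+1) - 1 = \<beta> * (1 - p k / p (k+1))\<close>, which makes
  \<open>a (k+1) + S_summand \<beta> p (k+1)\<close> a difference of consecutive values of this potential.\<close>
definition momentum_potential :: "real \<Rightarrow> (nat \<Rightarrow> real) \<Rightarrow> nat \<Rightarrow> real" where
  "momentum_potential \<beta> p k = - ln \<bar>p (k+1)\<bar> + \<beta> * ln \<bar>p k\<bar> + \<beta> * rfun (p k / p (k+1))"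

lemma momentum_potential_step:
  fixes p a :: "nat \<Rightarrow> real"
  assumes nz: "\<And>k. p k \<noteq> 0"
    and rec: "\<And>k. k \<ge> 1 \<Longrightarrow> p (k+1) = p k - a k * p k + \<beta> * (p k - p (k-1))"
  shows "a (k+1) + S_summand \<beta> p (k+1) = momentum_potential \<beta> p (Suc k) - momentum_potential \<beta> p k"
proof -
  have "p (k+2) = p (k+1) - a (k+1) * p (k+1) + \<beta> * (p (k+1) - p k)"
    using rec[of "k+1"] by (simp add: numeral_2_eq_2)
  then have "a (k+1) + p (k+2) / p (k+1) - 1 = \<beta> * (1 - p k / p (k+1))"
    using nz[of "k+1"] by (simp add: field_simps)
  then show ?thesis
    using nz[of k] nz[of "k+1"] nz[of "k+2"]
    by (simp add: momentum_potential_def S_summand_def rfun_def ln_div algebra_simps numeral_2_eq_2)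
qed

lemma momentum_potential_0:
  "p 1 = p 0 \<Longrightarrow> p 0 \<noteq> 0 \<Longrightarrow> momentum_potential \<beta> p 0 = - (1 - \<beta>) * ln \<bar>p 0\<bar>"
  by (simp add: momentum_potential_def rfun_def algebra_simps)

lemma momentum_potential_tendsto:
  fixes p :: "nat \<Rightarrow> real"
  assumes lim: "p \<longlonglongrightarrow> P" and P: "P \<noteq> 0"
  shows "momentum_potential \<beta> p \<longlonglongrightarrow> - (1 - \<beta>) * ln \<bar>P\<bar>"
proof -
  have "momentum_potential \<beta> p \<longlonglongrightarrow> - ln \<bar>P\<bar> + \<beta> * ln \<bar>P\<bar> + \<beta> * rfun (P / P)"
    unfolding momentum_potential_def [abs_def] rfun_def
    using P by (intro tendsto_intros lim LIMSEQ_ignore_initial_segment[OF lim]) auto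
  then show ?thesis using P by (simp add: rfun_def algebra_simps)
qed

lemma momentum_sum_tendsto:
  fixes p a :: "nat \<Rightarrow> real"
  assumes nz: "\<And>k. p k \<noteq> 0"
    and rec: "\<And>k. k \<ge> 1 \<Longrightarrow> p (k+1) = p k - a k * p k + \<beta> * (p k - p (k-1))"
    and init: "p 1 = p 0"
    and lim: "p \<longlonglongrightarrow> P" and P: "P \<noteq> 0"
  shows "(\<lambda>K. \<Sum>k<K. a (k+1) + S_summand \<beta> p (k+1)) \<longlonglongrightarrow> (1 - \<beta>) * ln \<bar>p 0 / P\<bar>"
proof -
  have "(\<lambda>K. \<Sum>k<K. a (k+1) + S_summand \<beta> p (k+1))
      = (\<lambda>K. momentum_potential \<beta> p K - momentum_potential \<beta> p 0)"
    by (simp only: momentum_potential_step[OF nz rec] sum_lessThan_telescope)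
  moreover have "(1 - \<beta>) * ln \<bar>p 0 / P\<bar> = - (1 - \<beta>) * ln \<bar>P\<bar> - momentum_potential \<beta> p 0"
    using nz[of 0] P by (simp add: momentum_potential_0[OF init nz] abs_divide ln_div algebra_simps)
  ultimately show ?thesis
    by (simp only:) (intro tendsto_intros momentum_potential_tendsto[OF lim P])
qed

lemma eventually_S_summand_nonneg:
  fixes p :: "nat \<Rightarrow> real"
  assumes lim: "p \<longlonglongrightarrow> P" and P: "P \<noteq> 0" and \<beta>: "\<beta> \<ge> 0"
  shows "eventually (\<lambda>k. S_summand \<beta> p k \<ge> 0) sequentially"
proof -
  have "(\<lambda>k. p k * P) \<longlonglongrightarrow> P * P" by (intro tendsto_intros lim)
  moreover have "P * P > 0" using P by (metis not_real_square_gt_zero)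
  ultimately have pos: "eventually (\<lambda>k. p k * P > 0) sequentially" by (rule order_tendstoD)
  moreover have "eventually (\<lambda>k. p (Suc k) * P > 0) sequentially"
    using pos by (subst eventually_sequentially_Suc)
  ultimately show ?thesis
  proof eventually_elim
    case (elim k)
    then have "p (k+1) / p k > 0" "p k / p (k+1) > 0"
      by (auto simp: zero_less_divide_iff zero_less_mult_iff)
    then show ?case using \<beta> by (simp add: S_summand_def rfun_nonneg)
  qed
qed

lemma summable_if_sum_convergent_eventually_nonneg:
  fixes f g :: "nat \<Rightarrow> real"
  assumes "eventually (\<lambda>k. f k \<ge> 0) sequentially" "eventually (\<lambda>k. g k \<ge> 0) sequentially"
    and "(\<lambda>K. \<Sum>k<K. f k + g k) \<longlonglongrightarrow> L"
  shows "summable f" "summable g"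
proof -
  have fg: "summable (\<lambda>k. f k + g k)" using assms(3) unfolding summable_def sums_def by blast
  have "eventually (\<lambda>k. norm (f k) \<le> f k + g k) sequentially"
    using assms(1,2) by eventually_elim auto
  then show f: "summable f" using fg by (rule summable_comparison_test_ev)
  have "eventually (\<lambda>k. norm (g k) \<le> f k + g k) sequentially"
    using assms(1,2) by eventually_elim auto
  then show "summable g" using fg by (rule summable_comparison_test_ev)
qed

text \<open>Adding the telescoping identities of two momentum recursions with opposite rates cancels the
  rates, which bounds the partial sums of the two eventually nonnegative series.\<close>
lemma momentum_pair_summable:
  fixes p m a :: "nat \<Rightarrow> real"
  assumes \<beta>: "0 \<le> \<beta>"
    and nz: "\<And>k. p k \<noteq> 0" "\<And>k. m k \<noteq> 0"
    and rec_p: "\<And>k. k \<ge> 1 \<Longrightarrow> p (k+1) = p k - a k * p k + \<beta> * (p k - p (k-1))"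
    and rec_m: "\<And>k. k \<ge> 1 \<Longrightarrow> m (k+1) = m k + a k * m k + \<beta> * (m k - m (k-1))"
    and init: "p 1 = p 0" "m 1 = m 0"
    and lim: "p \<longlonglongrightarrow> P" "m \<longlonglongrightarrow> M" and P: "P \<noteq> 0" and M: "M \<noteq> 0"
  shows "summable (\<lambda>k. S_summand \<beta> p (k+1))" "summable (\<lambda>k. S_summand \<beta> m (k+1))"
proof -
  let ?Sp = "\<lambda>k. S_summand \<beta> p (k+1)" and ?Sm = "\<lambda>k. S_summand \<beta> m (k+1)"
  have "(\<lambda>K. (\<Sum>k<K. a (k+1) + ?Sp k) + (\<Sum>k<K. - a (k+1) + ?Sm k)) \<longlonglongrightarrow>
      (1 - \<beta>) * ln \<bar>p 0 / P\<bar> + (1 - \<beta>) * ln \<bar>m 0 / M\<bar>"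
    using momentum_sum_tendsto[OF nz(1) rec_p init(1) lim(1) P]
      momentum_sum_tendsto[OF nz(2) _ init(2) lim(2) M, of "\<lambda>k. - a k"] rec_m
    by (intro tendsto_add) auto
  then have sum_lim: "(\<lambda>K. \<Sum>k<K. ?Sp k + ?Sm k) \<longlonglongrightarrow>
      (1 - \<beta>) * ln \<bar>p 0 / P\<bar> + (1 - \<beta>) * ln \<bar>m 0 / M\<bar>"
    by (simp add: sum.distrib[symmetric] algebra_simps)
  have ev_p: "eventually (\<lambda>k. ?Sp k \<ge> 0) sequentially"
    using eventually_S_summand_nonneg[OF lim(1) P \<beta>] by (rule eventually_sequentially_seg[THEN iffD2])
  have ev_m: "eventually (\<lambda>k. ?Sm k \<ge> 0) sequentially"
    using eventually_S_summand_nonneg[OF lim(2) M \<beta>] by (rule eventually_sequentially_seg[THEN iffD2])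
  show "summable ?Sp" "summable ?Sm"
    using summable_if_sum_convergent_eventually_nonneg[OF ev_p ev_m sum_lim] by blast+
qed

lemma momentum_pair_drift:
  fixes p m a :: "nat \<Rightarrow> real"
  assumes \<beta>: "0 \<le> \<beta>" "\<beta> < 1"
    and nz: "\<And>k. p k \<noteq> 0" "\<And>k. m k \<noteq> 0"
    and rec_p: "\<And>k. k \<ge> 1 \<Longrightarrow> p (k+1) = p k - a k * p k + \<beta> * (p k - p (k-1))"
    and rec_m: "\<And>k. k \<ge> 1 \<Longrightarrow> m (k+1) = m k + a k * m k + \<beta> * (m k - m (k-1))"
    and init: "p 1 = p 0" "m 1 = m 0"
    and lim: "p \<longlonglongrightarrow> P" "m \<longlonglongrightarrow> M" and P: "P \<noteq> 0" and M: "M \<noteq> 0"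
  shows "(\<lambda>K. \<Sum>k<K. a (k+1)) \<longlonglongrightarrow> - (1 - \<beta>) * (ln \<bar>P / p 0\<bar> + S_series \<beta> p)"
    and "ln \<bar>M / m 0\<bar> + S_series \<beta> m = - (ln \<bar>P / p 0\<bar> + S_series \<beta> p)"
proof -
  let ?Sp = "\<lambda>k. S_summand \<beta> p (k+1)" and ?Sm = "\<lambda>k. S_summand \<beta> m (k+1)"
  note summable = momentum_pair_summable[OF \<beta>(1) nz rec_p rec_m init lim P M]
  have series: "(\<lambda>K. \<Sum>k<K. ?Sp k) \<longlonglongrightarrow> (1 - \<beta>) * S_series \<beta> p"
    "(\<lambda>K. \<Sum>k<K. ?Sm k) \<longlonglongrightarrow> (1 - \<beta>) * S_series \<beta> m"
    using summable_LIMSEQ[OF summable(1)] summable_LIMSEQ[OF summable(2)] \<beta> by (simp_all add: S_series_def)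
  have "(\<lambda>K. (\<Sum>k<K. a (k+1) + ?Sp k) - (\<Sum>k<K. ?Sp k)) \<longlonglongrightarrow>
      (1 - \<beta>) * ln \<bar>p 0 / P\<bar> - (1 - \<beta>) * S_series \<beta> p"
    using momentum_sum_tendsto[OF nz(1) rec_p init(1) lim(1) P] series(1) by (rule tendsto_diff)
  then show lim_a: "(\<lambda>K. \<Sum>k<K. a (k+1)) \<longlonglongrightarrow> - (1 - \<beta>) * (ln \<bar>P / p 0\<bar> + S_series \<beta> p)"
    using nz(1)[of 0] P by (simp add: sum.distrib abs_divide ln_div algebra_simps)
  have "(\<lambda>K. (\<Sum>k<K. - a (k+1) + ?Sm k) - (\<Sum>k<K. ?Sm k)) \<longlonglongrightarrow>
      (1 - \<beta>) * ln \<bar>m 0 / M\<bar> - (1 - \<beta>) * S_series \<beta> m"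
    using momentum_sum_tendsto[OF nz(2) _ init(2) lim(2) M, of "\<lambda>k. - a k"] rec_m series(2)
    by (intro tendsto_diff) auto
  moreover have "(\<lambda>K. (\<Sum>k<K. - a (k+1) + ?Sm k) - (\<Sum>k<K. ?Sm k)) = (\<lambda>K. - (\<Sum>k<K. a (k+1)))"
    by (simp add: sum_subtractf)
  moreover have "(\<lambda>K. - (\<Sum>k<K. a (k+1))) \<longlonglongrightarrow> (1 - \<beta>) * (ln \<bar>P / p 0\<bar> + S_series \<beta> p)"
    using tendsto_minus[OF lim_a] by (simp add: algebra_simps)
  ultimately have "(1 - \<beta>) * ln \<bar>m 0 / M\<bar> - (1 - \<beta>) * S_series \<beta> m
      = (1 - \<beta>) * (ln \<bar>P / p 0\<bar> + S_series \<beta> p)"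
    using LIMSEQ_unique by metis
  then have "ln \<bar>m 0 / M\<bar> = ln \<bar>P / p 0\<bar> + S_series \<beta> p + S_series \<beta> m"
    using \<beta> by (simp add: right_diff_distrib[symmetric])
  then show "ln \<bar>M / m 0\<bar> + S_series \<beta> m = - (ln \<bar>P / p 0\<bar> + S_series \<beta> p)"
    using nz(2)[of 0] M by (simp add: abs_divide ln_div)
qed

lemma momentum_rate_tendsto_0:
  fixes p a :: "nat \<Rightarrow> real"
  assumes nz: "\<And>k. p k \<noteq> 0"
    and rec: "\<And>k. k \<ge> 1 \<Longrightarrow> p (k+1) = p k - a k * p k + \<beta> * (p k - p (k-1))"
    and lim: "p \<longlonglongrightarrow> P" and P: "P \<noteq> 0"
  shows "a \<longlonglongrightarrow> 0"
proof -
  have "a (Suc k) = (p (k+1) - p (k+2) + \<beta> * (p (k+1) - p k)) / p (k+1)" for k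
    using rec[of "k+1"] nz[of "k+1"] by (simp add: field_simps numeral_2_eq_2)
  moreover have "(\<lambda>k. (p (k+1) - p (k+2) + \<beta> * (p (k+1) - p k)) / p (k+1)) \<longlonglongrightarrow> (P - P + \<beta> * (P - P)) / P"
    using P by (intro tendsto_intros lim LIMSEQ_ignore_initial_segment[OF lim])
  ultimately have "(\<lambda>k. a (k+1)) \<longlonglongrightarrow> 0" using P by simp
  then show ?thesis by (rule LIMSEQ_offset)
qed

lemma arsinh_drift_shift:
  fixes P M p0 m0 Sp Sm E :: real
  assumes nz: "P \<noteq> 0" "M \<noteq> 0" "p0 \<noteq> 0" "m0 \<noteq> 0"
    and drift: "ln \<bar>P / p0\<bar> + Sp = E" "ln \<bar>M / m0\<bar> + Sm = - E"
  shows "\<bar>P\<bar> * \<bar>M\<bar> = \<bar>p0\<bar> * \<bar>m0\<bar> * exp (- (Sp + Sm))"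
    and "arsinh ((P\<^sup>2 - M\<^sup>2) / (2 * (\<bar>P\<bar> * \<bar>M\<bar>)))
       - arsinh ((p0\<^sup>2 * exp (-2 * Sp) - m0\<^sup>2 * exp (-2 * Sm)) / (2 * (\<bar>P\<bar> * \<bar>M\<bar>))) = 2 * E"
proof -
  define A where "A = \<bar>p0\<bar> * exp (- Sp)"
  define B where "B = \<bar>m0\<bar> * exp (- Sm)"
  have A: "A > 0" and B: "B > 0" using nz by (simp_all add: A_def B_def)
  have ln_A: "ln A = ln \<bar>p0\<bar> - Sp" and ln_B: "ln B = ln \<bar>m0\<bar> - Sm"
    using nz by (simp_all add: A_def B_def ln_mult)
  have "ln (\<bar>P\<bar> * \<bar>M\<bar>) = ln (A * B)"
    using nz A B drift by (simp add: ln_mult ln_div abs_divide ln_A ln_B algebra_simps)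
  then have PM: "\<bar>P\<bar> * \<bar>M\<bar> = A * B"
    using nz A B by (simp add: ln_inj_iff)
  then show "\<bar>P\<bar> * \<bar>M\<bar> = \<bar>p0\<bar> * \<bar>m0\<bar> * exp (- (Sp + Sm))"
    by (simp add: A_def B_def exp_add[symmetric] algebra_simps)
  have "p0\<^sup>2 * exp (-2 * Sp) = A\<^sup>2" "m0\<^sup>2 * exp (-2 * Sm) = B\<^sup>2"
    by (simp_all add: A_def B_def power_mult_distrib exp_of_nat_mult[symmetric] mult.commute)
  then have "arsinh ((p0\<^sup>2 * exp (-2 * Sp) - m0\<^sup>2 * exp (-2 * Sm)) / (2 * (\<bar>P\<bar> * \<bar>M\<bar>))) = ln (A / B)"
    using arsinh_power2_diff_div[OF A B] by (simp add: PM mult.assoc)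
  moreover have "arsinh ((P\<^sup>2 - M\<^sup>2) / (2 * (\<bar>P\<bar> * \<bar>M\<bar>))) = ln (\<bar>P\<bar> / \<bar>M\<bar>)"
    using arsinh_power2_diff_div[of "\<bar>P\<bar>" "\<bar>M\<bar>"] nz by (simp add: mult.assoc)
  moreover have "ln (\<bar>P\<bar> / \<bar>M\<bar>) - ln (A / B) = 2 * E"
    using drift nz A B by (simp add: ln_div ln_A ln_B abs_divide algebra_simps)
  ultimately show "arsinh ((P\<^sup>2 - M\<^sup>2) / (2 * (\<bar>P\<bar> * \<bar>M\<bar>)))
       - arsinh ((p0\<^sup>2 * exp (-2 * Sp) - m0\<^sup>2 * exp (-2 * Sm)) / (2 * (\<bar>P\<bar> * \<bar>M\<bar>))) = 2 * E"
    by simp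
qed

lemma hmul_nth_eq_power2_diff:
  "hmul u v $ i = (((u + v) $ i)\<^sup>2 - ((u - v) $ i)\<^sup>2) / 4"
  by (simp add: hmul_def power2_eq_square algebra_simps)

lemma momentum_hmul_sum_diff:
  fixes u v :: "nat \<Rightarrow> real^'d"
  assumes u: "u (k+1) = u k - \<gamma> *\<^sub>R hmul g (v k) + \<beta> *\<^sub>R (u k - u (k-1))"
    and v: "v (k+1) = v k - \<gamma> *\<^sub>R hmul g (u k) + \<beta> *\<^sub>R (v k - v (k-1))"
  shows "(u (k+1) + v (k+1)) $ i
      = (u k + v k) $ i - \<gamma> * g $ i * (u k + v k) $ i + \<beta> * ((u k + v k) $ i - (u (k-1) + v (k-1)) $ i)"
    and "(u (k+1) - v (k+1)) $ i
      = (u k - v k) $ i + \<gamma> * g $ i * (u k - v k) $ i + \<beta> * ((u k - v k) $ i - (u (k-1) - v (k-1)) $ i)"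
  by (simp_all only: u v) (simp_all add: hmul_def algebra_simps)

lemma inner_batch_grad_diff_interpolator:
  assumes "B \<subseteq> {..<n}" "s \<in> interpolators n x y"
  shows "inner (batch_grad x y B \<theta>) (\<theta> - s) = (\<Sum>j\<in>B. (y j - inner (x j) \<theta>)\<^sup>2) / card B"
proof -
  have "(y j - inner (x j) \<theta>) * inner (x j) (\<theta> - s) = - (y j - inner (x j) \<theta>)\<^sup>2" if "j \<in> B" for j
    using assms that by (auto simp: interpolators_def inner_diff_right inner_commute power2_eq_square algebra_simps)
  then have "(\<Sum>j\<in>B. (y j - inner (x j) \<theta>) * inner (x j) (\<theta> - s)) = - (\<Sum>j\<in>B. (y j - inner (x j) \<theta>)\<^sup>2)"
    by (simp add: sum_negf[symmetric])
  then show ?thesis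
    by (simp add: batch_grad_def inner_sum_left sum_divide_distrib[symmetric])
qed

lemma inner_batch_grad_interpolators_diff:
  assumes "B \<subseteq> {..<n}" "s \<in> interpolators n x y" "t \<in> interpolators n x y"
  shows "inner (batch_grad x y B \<theta>) (s - t) = 0"
proof -
  have "s - t = (\<theta> - t) - (\<theta> - s)" by simp
  then show ?thesis
    using inner_batch_grad_diff_interpolator[OF assms(1) assms(2), of \<theta>]
      inner_batch_grad_diff_interpolator[OF assms(1) assms(3), of \<theta>]
    by (simp add: inner_diff_right)
qed

text \<open>\<open>inner (batch_grad x y B \<theta>) (\<theta> - s)\<close> is the mean squared residual over the batch, so it
  dominates \<open>1/n\<close> times the squared residual of every sampled point.\<close>
lemma limit_in_interpolators:
  fixes \<theta> :: "nat \<Rightarrow> real^'d"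
  assumes batches: "\<And>k. k \<ge> 1 \<Longrightarrow> batch k \<subseteq> {..<n}"
    and sampled: "\<And>j. j < n \<Longrightarrow> infinite {k. k \<ge> 1 \<and> j \<in> batch k}"
    and nonempty: "interpolators n x y \<noteq> {}"
    and lim: "\<theta> \<longlonglongrightarrow> \<theta>_lim"
    and grad: "(\<lambda>k. batch_grad x y (batch k) (\<theta> k)) \<longlonglongrightarrow> 0"
  shows "\<theta>_lim \<in> interpolators n x y"
  unfolding interpolators_def
proof (intro CollectI allI impI, rule ccontr)
  fix j assume j: "j < n" and ne: "inner \<theta>_lim (x j) \<noteq> y j"
  obtain s where s: "s \<in> interpolators n x y" using nonempty by blast
  define r where "r k = (y j - inner (x j) (\<theta> k))\<^sup>2" for k
  define \<rho> where "\<rho> = (y j - inner (x j) \<theta>_lim)\<^sup>2"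
  have \<rho>: "\<rho> > 0" using ne by (simp add: \<rho>_def inner_commute)
  have n: "real n > 0" using j by simp
  have "(\<lambda>k. inner (batch_grad x y (batch k) (\<theta> k)) (\<theta> k - s)) \<longlonglongrightarrow> inner 0 (\<theta>_lim - s)"
    by (intro tendsto_intros grad lim)
  then have small: "eventually (\<lambda>k. inner (batch_grad x y (batch k) (\<theta> k)) (\<theta> k - s) < \<rho> / (2 * n)) sequentially"
    using \<rho> n by (intro order_tendstoD(2)) auto
  have "r \<longlonglongrightarrow> \<rho>"
    unfolding r_def [abs_def] \<rho>_def by (intro tendsto_intros lim)
  then have large: "eventually (\<lambda>k. r k > \<rho> / 2) sequentially"
    using \<rho> by (intro order_tendstoD(1)) auto
  have "frequently (\<lambda>k. k \<ge> 1 \<and> j \<in> batch k) sequentially"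
    using sampled[OF j] unfolding cofinite_eq_sequentially[symmetric] frequently_cofinite by simp
  from frequently_eventually_conj[OF this eventually_conj[OF small large]]
  obtain k where k: "k \<ge> 1" "j \<in> batch k"
    and small: "inner (batch_grad x y (batch k) (\<theta> k)) (\<theta> k - s) < \<rho> / (2 * n)" and large: "r k > \<rho> / 2"
    by (auto dest: frequently_ex)
  have B: "batch k \<subseteq> {..<n}" using batches[OF k(1)] .
  then have "finite (batch k)" "card (batch k) \<le> n" "card (batch k) > 0"
    using k(2) finite_subset card_mono[of "{..<n}" "batch k"] by (auto simp: card_gt_0_iff)
  then have "r k / n \<le> (\<Sum>j\<in>batch k. (y j - inner (x j) (\<theta> k))\<^sup>2) / card (batch k)"
    using k(2) n by (intro frac_le) (auto simp: r_def intro: member_le_sum sum_nonneg)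
  also have "\<dots> < \<rho> / (2 * n)"
    using small by (simp add: inner_batch_grad_diff_interpolator[OF B s])
  finally have "r k / n < \<rho> / 2 / n" by simp
  moreover have "\<rho> / 2 / n < r k / n" using divide_strict_right_mono[OF large n] .
  ultimately show False by simp
qed

lemma tendsto_hmul [tendsto_intros]:
  "(f \<longlongrightarrow> a) F \<Longrightarrow> (g \<longlongrightarrow> b) F \<Longrightarrow> ((\<lambda>x. hmul (f x) (g x)) \<longlongrightarrow> hmul a b) F"
  unfolding hmul_def by (intro vec_tendstoI) (auto intro!: tendsto_intros)

lemma inner_eq_0_if_partial_sums_tendsto:
  fixes G :: "nat \<Rightarrow> 'a::real_inner"
  assumes "\<And>k. inner (G k) d = 0" and "(\<lambda>K. \<Sum>k<K. G k) \<longlonglongrightarrow> c"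
  shows "inner c d = 0"
proof -
  have "(\<lambda>K. inner (\<Sum>k<K. G k) d) \<longlonglongrightarrow> inner c d"
    by (intro tendsto_intros assms(2))
  then show ?thesis by (simp add: inner_sum_left assms(1) LIMSEQ_const_iff)
qed

text \<open>No property of \<open>g\<close> is assumed: the drift identities hold whatever loss produces the gradients.\<close>
locale momentum_diagonal_net =
  fixes \<beta> \<gamma> :: real and g u v :: "nat \<Rightarrow> real^'d" and u_lim v_lim :: "real^'d"
  assumes beta: "0 \<le> \<beta>" "\<beta> < 1"
    and init: "u 1 = u 0" "v 1 = v 0"
    and rec_u: "\<And>k. k \<ge> 1 \<Longrightarrow> u (k+1) = u k - \<gamma> *\<^sub>R hmul (g k) (v k) + \<beta> *\<^sub>R (u k - u (k-1))"
    and rec_v: "\<And>k. k \<ge> 1 \<Longrightarrow> v (k+1) = v k - \<gamma> *\<^sub>R hmul (g k) (u k) + \<beta> *\<^sub>R (v k - v (k-1))"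
    and conv: "u \<longlonglongrightarrow> u_lim" "v \<longlonglongrightarrow> v_lim"
    and Delta_lim_nz: "\<And>i. \<bar>(u_lim$i)\<^sup>2 - (v_lim$i)\<^sup>2\<bar> \<noteq> 0"
    and w_nz: "\<And>k i. (u k + v k)$i \<noteq> 0 \<and> (u k - v k)$i \<noteq> 0"
begin

definition drift :: "real^'d" where
  "drift = (\<chi> i. ln \<bar>(u_lim + v_lim) $ i / (u 0 + v 0) $ i\<bar> + S_sum \<beta> (\<lambda>k. u k + v k) $ i)"

lemma limits_nz: "(u_lim + v_lim) $ i \<noteq> 0" "(u_lim - v_lim) $ i \<noteq> 0"
  using Delta_lim_nz[of i] by (auto simp: abs_power2_diff)

lemma coordinate_limits:
  "(\<lambda>k. (u k + v k) $ i) \<longlonglongrightarrow> (u_lim + v_lim) $ i" "(\<lambda>k. (u k - v k) $ i) \<longlonglongrightarrow> (u_lim - v_lim) $ i"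
  by (intro tendsto_intros conv)+

lemma coordinate_recursions:
  assumes "k \<ge> 1"
  shows "(u (k+1) + v (k+1)) $ i
      = (u k + v k) $ i - \<gamma> * g k $ i * (u k + v k) $ i + \<beta> * ((u k + v k) $ i - (u (k-1) + v (k-1)) $ i)"
    and "(u (k+1) - v (k+1)) $ i
      = (u k - v k) $ i + \<gamma> * g k $ i * (u k - v k) $ i + \<beta> * ((u k - v k) $ i - (u (k-1) - v (k-1)) $ i)"
  using momentum_hmul_sum_diff[OF rec_u[OF assms] rec_v[OF assms]] by simp_all

lemma coordinate_drift:
  shows "summable (\<lambda>k. S_term \<beta> (\<lambda>k. u k + v k) i (k+1))"
    and "summable (\<lambda>k. S_term \<beta> (\<lambda>k. u k - v k) i (k+1))"
    and "(\<lambda>K. \<Sum>k<K. \<gamma> * g (k+1) $ i) \<longlonglongrightarrow> - (1 - \<beta>) * drift $ i"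
    and "ln \<bar>(u_lim - v_lim) $ i / (u 0 - v 0) $ i\<bar> + S_sum \<beta> (\<lambda>k. u k - v k) $ i = - drift $ i"
  using momentum_pair_summable[OF beta(1), of "\<lambda>k. (u k + v k) $ i" "\<lambda>k. (u k - v k) $ i" "\<lambda>k. \<gamma> * g k $ i",
      OF _ _ coordinate_recursions(1) coordinate_recursions(2) _ _ coordinate_limits limits_nz]
    momentum_pair_drift[OF beta, of "\<lambda>k. (u k + v k) $ i" "\<lambda>k. (u k - v k) $ i" "\<lambda>k. \<gamma> * g k $ i",
      OF _ _ coordinate_recursions(1) coordinate_recursions(2) _ _ coordinate_limits limits_nz] w_nz init
  by (simp_all add: S_term_eq_S_summand S_sum_nth drift_def)

lemma Delta_lim_eq:
  "\<bar>(u_lim$i)\<^sup>2 - (v_lim$i)\<^sup>2\<bar>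
     = \<bar>(u 0$i)\<^sup>2 - (v 0$i)\<^sup>2\<bar> * exp (- (S_sum \<beta> (\<lambda>k. u k + v k) $ i + S_sum \<beta> (\<lambda>k. u k - v k) $ i))"
  using arsinh_drift_shift(1)[OF limits_nz w_nz[THEN conjunct1] w_nz[THEN conjunct2] _ coordinate_drift(4)]
  by (simp add: abs_power2_diff drift_def)

lemma arsinh_mirror_diff:
  fixes i :: 'd
  defines "\<Delta> \<equiv> \<bar>(u_lim$i)\<^sup>2 - (v_lim$i)\<^sup>2\<bar>"
  shows "arsinh (2 * hmul u_lim v_lim $ i / \<Delta>)
      - arsinh (2 * ((1/4) * (((u 0 + v 0)$i)\<^sup>2 * exp (-2 * S_sum \<beta> (\<lambda>k. u k + v k) $ i)
                         - ((u 0 - v 0)$i)\<^sup>2 * exp (-2 * S_sum \<beta> (\<lambda>k. u k - v k) $ i))) / \<Delta>)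
      = 2 * drift $ i"
proof -
  let ?P = "(u_lim + v_lim) $ i" and ?M = "(u_lim - v_lim) $ i"
  have \<Delta>: "\<Delta> = \<bar>?P\<bar> * \<bar>?M\<bar>" by (simp add: \<Delta>_def abs_power2_diff)
  have "2 * (z / 4) / \<Delta> = z / (2 * (\<bar>?P\<bar> * \<bar>?M\<bar>))"
    and "2 * ((1/4) * z) / \<Delta> = z / (2 * (\<bar>?P\<bar> * \<bar>?M\<bar>))" for z :: real
    by (simp_all add: \<Delta>)
  note scale = this
  have "ln \<bar>?P / (u 0 + v 0) $ i\<bar> + S_sum \<beta> (\<lambda>k. u k + v k) $ i = drift $ i"
    by (simp add: drift_def)
  from arsinh_drift_shift(2)[OF limits_nz w_nz[THEN conjunct1] w_nz[THEN conjunct2] this coordinate_drift(4)]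
  show ?thesis
    unfolding hmul_nth_eq_power2_diff scale .
qed

lemma rate_sum_tendsto: "(\<lambda>K. \<Sum>k<K. \<gamma> *\<^sub>R g (k+1)) \<longlonglongrightarrow> - (1 - \<beta>) *\<^sub>R drift"
proof (rule vec_tendstoI)
  fix i
  show "(\<lambda>K. (\<Sum>k<K. \<gamma> *\<^sub>R g (k+1)) $ i) \<longlonglongrightarrow> (- (1 - \<beta>) *\<^sub>R drift) $ i"
    using coordinate_drift(3)[of i] by (simp add: sum_component)
qed

lemma grad_tendsto_0:
  assumes "\<gamma> \<noteq> 0"
  shows "g \<longlonglongrightarrow> 0"
proof (rule vec_tendstoI)
  fix i
  have "(\<lambda>k. \<gamma> * g k $ i) \<longlonglongrightarrow> \<gamma> * 0"
    using momentum_rate_tendsto_0[OF _ coordinate_recursions(1) coordinate_limits(1) limits_nz(1)] w_nz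
    by simp
  then show "(\<lambda>k. g k $ i) \<longlonglongrightarrow> 0 $ i" using assms by simp
qed

end

theorem theorem2:
  fixes n Bsz :: nat
    and x :: "nat \<Rightarrow> real^'d" and y :: "nat \<Rightarrow> real"
    and \<gamma> \<beta> :: real
    and batch :: "nat \<Rightarrow> nat set"
    and u v :: "nat \<Rightarrow> real^'d"
    and u_inf v_inf :: "real^'d"
  assumes Bsz: "1 \<le> Bsz" "Bsz \<le> n"
    and gamma: "\<gamma> > 0"
    and beta: "0 \<le> \<beta>" "\<beta> < 1"
    and batches: "\<And>k. k \<ge> 1 \<Longrightarrow> batch k \<subseteq> {..<n} \<and> card (batch k) = Bsz"
    and every_point_sampled: "\<And>i. i < n \<Longrightarrow> infinite {k. k \<ge> 1 \<and> i \<in> batch k}"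
    and S_nonempty: "interpolators n x y \<noteq> {}"
    and init_u: "u 1 = u 0" and init_v: "v 1 = v 0"
    and rec_u: "\<And>k. k \<ge> 1 \<Longrightarrow> u (k+1) =
        u k - \<gamma> *\<^sub>R hmul (batch_grad x y (batch k) (hmul (u k) (v k))) (v k) + \<beta> *\<^sub>R (u k - u (k-1))"
    and rec_v: "\<And>k. k \<ge> 1 \<Longrightarrow> v (k+1) =
        v k - \<gamma> *\<^sub>R hmul (batch_grad x y (batch k) (hmul (u k) (v k))) (u k) + \<beta> *\<^sub>R (v k - v (k-1))"
    and conv_u: "u \<longlonglongrightarrow> u_inf" and conv_v: "v \<longlonglongrightarrow> v_inf"
    and Delta_inf_nz: "\<And>i. \<bar>(u_inf$i)^2 - (v_inf$i)^2\<bar> \<noteq> 0"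
    and w_nz: "\<And>k i. (u k + v k)$i \<noteq> 0 \<and> (u k - v k)$i \<noteq> 0"
  shows "(let \<theta>_inf = hmul u_inf v_inf;
              wp = (\<lambda>k. u k + v k); wm = (\<lambda>k. u k - v k);
              Sp = S_sum \<beta> wp; Sm = S_sum \<beta> wm;
              \<Delta>_0 = (\<chi> i. \<bar>(u 0$i)^2 - (v 0$i)^2\<bar>);
              \<Delta>_inf = (\<chi> i. \<bar>(u_inf$i)^2 - (v_inf$i)^2\<bar>);
              \<theta>t_0 = (\<chi> i. (1/4) * ((wp 0$i)^2 * exp (-2 * Sp$i) - (wm 0$i)^2 * exp (-2 * Sm$i)))
          in (\<forall>i. summable (\<lambda>k. S_term \<beta> wp i (k+1)) \<and> summable (\<lambda>k. S_term \<beta> wm i (k+1)))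
             \<and> \<Delta>_inf = (\<chi> i. \<Delta>_0$i * exp (- (Sp$i + Sm$i)))
             \<and> \<theta>_inf \<in> interpolators n x y
             \<and> (\<forall>\<theta>s \<in> interpolators n x y.
                  bregman (hyp_entropy \<Delta>_inf) \<theta>_inf \<theta>t_0 \<le> bregman (hyp_entropy \<Delta>_inf) \<theta>s \<theta>t_0))"
proof -
  define g where "g k = batch_grad x y (batch k) (hmul (u k) (v k))" for k
  define \<Delta> where "\<Delta> = (\<chi> i. \<bar>(u_inf$i)\<^sup>2 - (v_inf$i)\<^sup>2\<bar>)"
  define \<theta>t_0 where "\<theta>t_0 = (\<chi> i. (1/4) * (((u 0 + v 0)$i)\<^sup>2 * exp (-2 * S_sum \<beta> (\<lambda>k. u k + v k) $ i)
      - ((u 0 - v 0)$i)\<^sup>2 * exp (-2 * S_sum \<beta> (\<lambda>k. u k - v k) $ i)))"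
  interpret momentum_diagonal_net \<beta> \<gamma> g u v u_inf v_inf
    using beta init_u init_v rec_u rec_v conv_u conv_v Delta_inf_nz w_nz
    by unfold_locales (simp_all add: g_def)
  have "(\<lambda>k. batch_grad x y (batch k) (hmul (u k) (v k))) \<longlonglongrightarrow> 0"
    using grad_tendsto_0 gamma by (simp add: g_def [abs_def])
  then have interp: "hmul u_inf v_inf \<in> interpolators n x y"
    using batches
    by (intro limit_in_interpolators[OF _ every_point_sampled S_nonempty tendsto_hmul[OF conv_u conv_v]]) auto
  have "bregman (hyp_entropy \<Delta>) (hmul u_inf v_inf) \<theta>t_0 \<le> bregman (hyp_entropy \<Delta>) \<theta>s \<theta>t_0"
    if \<theta>s: "\<theta>s \<in> interpolators n x y" for \<theta>s
  proof (rule bregman_hyp_entropy_le)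
    have "inner (- (1 - \<beta>) *\<^sub>R drift) (\<theta>s - hmul u_inf v_inf) = 0"
      using inner_batch_grad_interpolators_diff[OF _ \<theta>s interp] batches
      by (intro inner_eq_0_if_partial_sums_tendsto[OF _ rate_sum_tendsto]) (simp add: g_def)
    then have "inner drift (\<theta>s - hmul u_inf v_inf) = 0" using beta by simp
    moreover have "arsinh (2 * hmul u_inf v_inf $ i / \<Delta> $ i) - arsinh (2 * \<theta>t_0 $ i / \<Delta> $ i) = 2 * drift $ i" for i
      unfolding \<Delta>_def \<theta>t_0_def vec_lambda_beta by (rule arsinh_mirror_diff)
    ultimately show "(\<Sum>i\<in>UNIV. (arsinh (2 * hmul u_inf v_inf $ i / \<Delta> $ i) - arsinh (2 * \<theta>t_0 $ i / \<Delta> $ i))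
        * (\<theta>s $ i - hmul u_inf v_inf $ i)) = 0"
      by (simp add: inner_vec_def sum_distrib_left[symmetric] mult.assoc)
  qed (use Delta_inf_nz in \<open>simp add: \<Delta>_def\<close>)
  then show ?thesis
    using coordinate_drift(1,2) Delta_lim_eq interp
    by (simp add: Let_def vec_eq_iff \<Delta>_def \<theta>t_0_def)
qed

end
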